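(* Let $\mathcal I$ be an instance of the a priori TRP on a metric $(V,d)$ with root $r$, $n=|V|$, and probabilities $\{p_v\}$. Let $X=\{v\in V: p_v\ge 1/n^2\}$, $p=\frac1n\min_{v\in X}p_v$, and let $\mathcal J$ be the uniform instance on the vertex set $\bigcup_{v\in X}S_v$, where $S_v$ consists of $t_v=\lceil p_v/p\rceil$ co-located copies of $v$ (distance $0$ within $S_v$, distance $d(u,v)$ between copies of $u$ and $v$), each copy independently active with probability $p$. Suppose $\widehat\pi$ is a consecutive master tour on $\mathcal J$ (visiting each $S_v$ consecutively) whose expected latency is at most $\rho\,\mathrm{OPT}(\mathcal J)$, and let $\pi$ be the tour on $X$ visiting the vertices of $X$ in the order in which the groups $S_v$ appear in $\widehat\pi$. Then, with $A$ the random active set of $\mathcal I$, $$\mathbb{E}_A\Big[\sum_{v\in A\cap X}\mathsf{LAT}^A_\pi(v)\Big]\le(1+o(1))\left(\frac{e}{e-1}\right)^4\rho\cdot\mathrm{OPT}_X,$$ where $\mathrm{OPT}_X$ is the optimal value of the a priori TRP instance restricted to the vertices $X$, and $o(1)$ is with respect to $n\to\infty$.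
   Context: An instance of the a priori TRP consists of a finite metric $(V,d)$, a root $r$, and independent activation probabilities $p_v$. A master tour is a tour from $r$ visiting all vertices; for a random active set $A$ (each $v$ independently active with probability $p_v$), the tour is shortcut to $A$, and $\mathsf{LAT}^A_\pi(v)$ is the distance from $r$ to $v$ along the shortcut tour. The expected latency (cost) of a master tour is the expected sum of latencies of active vertices; $\mathrm{OPT}$ denotes the minimum cost over master tours. *)

theory Defs
  imports Complex_Main
begin

definition metric_on :: "'a set \<Rightarrow> ('a \<Rightarrow> 'a \<Rightarrow> real) \<Rightarrow> bool" where
  "metric_on V d \<longleftrightarrow>
     (\<forall>u\<in>V. \<forall>v\<in>V. d u v \<ge> 0 \<and> d u v = d v u \<and> (d u v = 0 \<longleftrightarrow> u = v)) \<and>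
     (\<forall>u\<in>V. \<forall>v\<in>V. \<forall>w\<in>V. d u w \<le> d u v + d v w)"

definition act_prob :: "'a set \<Rightarrow> ('a \<Rightarrow> real) \<Rightarrow> 'a set \<Rightarrow> real" where
  "act_prob C p A = (\<Prod>v\<in>A. p v) * (\<Prod>v\<in>C - A. 1 - p v)"

fun path_len :: "('a \<Rightarrow> 'a \<Rightarrow> real) \<Rightarrow> 'a list \<Rightarrow> real" where
  "path_len d (x # y # xs) = d x y + path_len d (y # xs)"
| "path_len d _ = 0"

text \<open>Latency of v when the master tour pi (order of visits after leaving r)
  is shortcut to the active set A: distance from r to v along the shortcut tour.\<close>
definition lat :: "('a \<Rightarrow> 'a \<Rightarrow> real) \<Rightarrow> 'a \<Rightarrow> 'a list \<Rightarrow> 'a set \<Rightarrow> 'a \<Rightarrow> real" where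
  "lat d r \<pi> A v = path_len d (r # takeWhile (\<lambda>u. u \<noteq> v) (filter (\<lambda>u. u \<in> A) \<pi>) @ [v])"

definition exp_lat :: "('a \<Rightarrow> 'a \<Rightarrow> real) \<Rightarrow> 'a \<Rightarrow> 'a set \<Rightarrow> ('a \<Rightarrow> real) \<Rightarrow> 'a list \<Rightarrow> real" where
  "exp_lat d r C p \<pi> = (\<Sum>A\<in>Pow C. act_prob C p A * (\<Sum>v\<in>A \<inter> set \<pi>. lat d r \<pi> A v))"

text \<open>Master tours on client set C (root excluded): orderings of C.\<close>
definition master_tours :: "'a set \<Rightarrow> 'a list set" where
  "master_tours C = {\<pi>. distinct \<pi> \<and> set \<pi> = C}"

definition opt :: "('a \<Rightarrow> 'a \<Rightarrow> real) \<Rightarrow> 'a \<Rightarrow> 'a set \<Rightarrow> ('a \<Rightarrow> real) \<Rightarrow> real" where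
  "opt d r C p = Min (exp_lat d r C p ` master_tours C)"

definition heavy :: "'a set \<Rightarrow> 'a \<Rightarrow> ('a \<Rightarrow> real) \<Rightarrow> 'a set" where
  "heavy V r p = {v \<in> V - {r}. p v \<ge> 1 / real (card V) ^ 2}"

definition J_prob :: "'a set \<Rightarrow> 'a \<Rightarrow> ('a \<Rightarrow> real) \<Rightarrow> real" where
  "J_prob V r p = (1 / real (card V)) * Min (p ` heavy V r p)"

definition J_copies :: "'a set \<Rightarrow> 'a \<Rightarrow> ('a \<Rightarrow> real) \<Rightarrow> 'a \<Rightarrow> nat" where
  "J_copies V r p v = nat \<lceil>p v / J_prob V r p\<rceil>"

text \<open>Clients of the uniform instance J: copies (v,i), 1 <= i <= t_v, of heavy v.
  The root of J is (r,0), which is not a client.\<close>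
definition J_clients :: "'a set \<Rightarrow> 'a \<Rightarrow> ('a \<Rightarrow> real) \<Rightarrow> ('a \<times> nat) set" where
  "J_clients V r p = (SIGMA v:heavy V r p. {1..J_copies V r p v})"

definition J_dist :: "('a \<Rightarrow> 'a \<Rightarrow> real) \<Rightarrow> ('a \<times> nat) \<Rightarrow> ('a \<times> nat) \<Rightarrow> real" where
  "J_dist d x y = d (fst x) (fst y)"

definition consecutive :: "('a \<times> nat) list \<Rightarrow> bool" where
  "consecutive \<pi> \<longleftrightarrow> (\<forall>i j k. i \<le> j \<and> j \<le> k \<and> k < length \<pi> \<and> fst (\<pi> ! i) = fst (\<pi> ! k)
       \<longrightarrow> fst (\<pi> ! j) = fst (\<pi> ! i))"

end

theory Submission
  imports Defs
begin

text \<open>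
  Conditioning on the activity of a vertex \<open>v\<close>, the expected latency of a master tour becomes
  \<open>\<Sum>\<^sub>v p\<^sub>v L\<^sub>v\<close>, where \<open>L\<^sub>v\<close> is the expected length of the walk from the root through
  the independently activated predecessors of \<open>v\<close>.  Scaling the activation probabilities down
  by a factor \<open>\<beta> \<le> 1\<close> decreases this walk length by at most the factor \<open>\<beta>\<^sup>2\<close>.  In the uniform
  instance the group of \<open>t\<^sub>u\<close> copies of \<open>u\<close> behaves, for a consecutive tour, like the single
  vertex \<open>u\<close> activated with probability \<open>q\<^sub>u = 1 - (1 - p)^t\<^sub>u\<close>, and
  \<open>p\<^sub>u/2 \<le> q\<^sub>u \<le> t\<^sub>u p \<le> (1 + 1/n) p\<^sub>u\<close> because \<open>p \<le> p\<^sub>u/n\<close>.  Hence the induced tour on \<open>X\<close>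
  costs at most four times the given tour on the uniform instance, and blowing up an optimal
  tour on \<open>X\<close> shows that the uniform optimum is at most \<open>(1 + 1/n)\<^sup>3\<close> times the optimum on \<open>X\<close>.
  The factor \<open>4\<close> obtained this way is below \<open>(e/(e - 1))\<^sup>4\<close>.
\<close>

section \<open>Expected latency as a sum of expected walk lengths\<close>

text \<open>\<open>exp_path d s xs v\<close> is the expected length of the walk from \<open>s\<close> to \<open>v\<close> through those
  points \<open>x\<close> of \<open>xs\<close>, in order, that are activated independently with their probability \<open>a\<close>.\<close>

fun exp_path :: "('b \<Rightarrow> 'b \<Rightarrow> real) \<Rightarrow> 'b \<Rightarrow> ('b \<times> real) list \<Rightarrow> 'b \<Rightarrow> real" where
  "exp_path d s [] v = d s v"
| "exp_path d s ((x, a) # xs) v = a * (d s x + exp_path d x xs v) + (1 - a) * exp_path d s xs v"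

text \<open>The expected latency of \<open>v\<close> under the master tour \<open>\<pi>\<close>, given that \<open>v\<close> is active.\<close>

definition cond_lat :: "('b \<Rightarrow> 'b \<Rightarrow> real) \<Rightarrow> 'b \<Rightarrow> ('b \<Rightarrow> real) \<Rightarrow> 'b list \<Rightarrow> 'b \<Rightarrow> real" where
  "cond_lat d r p \<pi> v = exp_path d r (map (\<lambda>u. (u, p u)) (takeWhile (\<lambda>u. u \<noteq> v) \<pi>)) v"

lemma sum_act_prob_Pow: "finite C \<Longrightarrow> (\<Sum>A\<in>Pow C. act_prob C p A) = 1"
  using prod_add[of C p "\<lambda>x. 1 - p x"] by (simp add: act_prob_def)

lemma sum_act_prob_insert:
  assumes "finite C" "w \<notin> C"
  shows "(\<Sum>A\<in>Pow (insert w C). act_prob (insert w C) p A * f A)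
       = (1 - p w) * (\<Sum>A\<in>Pow C. act_prob C p A * f A)
         + p w * (\<Sum>A\<in>Pow C. act_prob C p A * f (insert w A))"
proof -
  have absent: "act_prob (insert w C) p A = (1 - p w) * act_prob C p A" if "A \<subseteq> C" for A
  proof -
    have "insert w C - A = insert w (C - A)" using assms that by auto
    then show ?thesis using assms by (simp add: act_prob_def mult_ac)
  qed
  have present: "act_prob (insert w C) p (insert w A) = p w * act_prob C p A" if "A \<subseteq> C" for A
  proof -
    have "insert w C - insert w A = C - A" using assms that by auto
    moreover have "finite A" "w \<notin> A" using assms that by (auto dest: finite_subset)
    ultimately show ?thesis by (simp add: act_prob_def mult_ac)
  qed
  have "(\<Sum>A\<in>Pow (insert w C). act_prob (insert w C) p A * f A)
      = (\<Sum>A\<in>Pow C. act_prob (insert w C) p A * f A)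
        + (\<Sum>A\<in>insert w ` Pow C. act_prob (insert w C) p A * f A)"
    unfolding Pow_insert by (rule sum.union_disjoint) (use assms in auto)
  also have "(\<Sum>A\<in>insert w ` Pow C. act_prob (insert w C) p A * f A)
      = (\<Sum>A\<in>Pow C. act_prob (insert w C) p (insert w A) * f (insert w A))"
    by (rule sum.reindex_cong[where l="insert w"]) (use assms in \<open>auto simp: inj_on_def\<close>)
  also have "(\<Sum>A\<in>Pow C. act_prob (insert w C) p A * f A) = (1 - p w) * (\<Sum>A\<in>Pow C. act_prob C p A * f A)"
    unfolding sum_distrib_left by (intro sum.cong refl) (auto simp: absent)
  also have "(\<Sum>A\<in>Pow C. act_prob (insert w C) p (insert w A) * f (insert w A))
      = p w * (\<Sum>A\<in>Pow C. act_prob C p A * f (insert w A))"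
    unfolding sum_distrib_left by (intro sum.cong refl) (auto simp: present)
  finally show ?thesis .
qed

lemma sum_act_prob_marginal:
  assumes "finite C" "T \<subseteq> C"
  shows "(\<Sum>A\<in>Pow C. act_prob C p A * h (A \<inter> T)) = (\<Sum>B\<in>Pow T. act_prob T p B * h B)"
proof -
  have "(\<Sum>A\<in>Pow (T \<union> D). act_prob (T \<union> D) p A * h (A \<inter> T)) = (\<Sum>B\<in>Pow T. act_prob T p B * h B)"
    if "finite D" "D \<inter> T = {}" for D
    using that
  proof (induction D rule: finite_induct)
    case empty
    show ?case by (auto intro: sum.cong simp: Int_absorb2)
  next
    case (insert w D)
    have same: "insert w A \<inter> T = A \<inter> T" for A using insert.prems by auto
    have TD: "T \<union> insert w D = insert w (T \<union> D)" "finite (T \<union> D)" "w \<notin> T \<union> D"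
      using insert finite_subset[OF assms(2,1)] by auto
    have "(\<Sum>A\<in>Pow (T \<union> insert w D). act_prob (T \<union> insert w D) p A * h (A \<inter> T))
        = (1 - p w) * (\<Sum>A\<in>Pow (T \<union> D). act_prob (T \<union> D) p A * h (A \<inter> T))
          + p w * (\<Sum>A\<in>Pow (T \<union> D). act_prob (T \<union> D) p A * h (A \<inter> T))"
      unfolding TD(1) sum_act_prob_insert[OF TD(2,3)] same ..
    then show ?case using insert by (simp add: left_diff_distrib)
  qed
  moreover have "(C - T) \<inter> T = {}" "T \<union> (C - T) = C" using assms(2) by auto
  ultimately show ?thesis using assms(1) by (metis finite_Diff)
qed

lemma sum_act_prob_path_len:
  assumes "distinct xs"
  shows "(\<Sum>B\<in>Pow (set xs). act_prob (set xs) p B * path_len d (s # filter (\<lambda>u. u \<in> B) xs @ [v]))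
       = exp_path d s (map (\<lambda>u. (u, p u)) xs) v"
  using assms
proof (induction xs arbitrary: s)
  case Nil
  show ?case by (simp add: act_prob_def)
next
  case (Cons x xs)
  have x: "x \<notin> set xs" "distinct xs" using Cons.prems by auto
  have skip: "filter (\<lambda>u. u \<in> B) (x # xs) = filter (\<lambda>u. u \<in> B) xs" if "B \<in> Pow (set xs)" for B
    using that x by (auto intro!: filter_cong)
  have visit: "filter (\<lambda>u. u \<in> insert x B) (x # xs) = x # filter (\<lambda>u. u \<in> B) xs" if "B \<in> Pow (set xs)" for B
    using that x by (auto intro!: filter_cong)
  let ?E = "\<lambda>s. \<Sum>B\<in>Pow (set xs). act_prob (set xs) p B * path_len d (s # filter (\<lambda>u. u \<in> B) xs @ [v])"
  have "(\<Sum>B\<in>Pow (set (x # xs)). act_prob (set (x # xs)) p B * path_len d (s # filter (\<lambda>u. u \<in> B) (x # xs) @ [v]))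
      = (1 - p x) * ?E s
        + p x * (\<Sum>B\<in>Pow (set xs). act_prob (set xs) p B * path_len d (s # x # filter (\<lambda>u. u \<in> B) xs @ [v]))"
    unfolding list.set(2) sum_act_prob_insert[OF finite_set x(1)]
    by (intro arg_cong2[where f="(+)"] arg_cong2[where f="(*)"] refl sum.cong)
      (simp_all only: skip visit append_Cons)
  also have "(\<Sum>B\<in>Pow (set xs). act_prob (set xs) p B * path_len d (s # x # filter (\<lambda>u. u \<in> B) xs @ [v]))
      = d s x * (\<Sum>B\<in>Pow (set xs). act_prob (set xs) p B) + ?E x"
    by (simp add: sum.distrib sum_distrib_left ring_distribs mult_ac)
  also have "\<dots> = d s x + ?E x" by (simp add: sum_act_prob_Pow)
  finally show ?case by (simp add: Cons.IH x add.commute)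
qed

lemma sum_act_prob_lat:
  assumes "finite C" "distinct \<pi>" "set \<pi> \<subseteq> C" "v \<in> set \<pi>"
  shows "(\<Sum>A\<in>Pow C. act_prob C p A * (if v \<in> A then lat d r \<pi> A v else 0)) = p v * cond_lat d r p \<pi> v"
proof -
  define pre where "pre = takeWhile (\<lambda>u. u \<noteq> v) \<pi>"
  define h where "h B = (if v \<in> B then path_len d (r # filter (\<lambda>u. u \<in> B) pre @ [v]) else 0)" for B
  have v: "v \<notin> set pre" and pre: "distinct pre" "set pre \<subseteq> C"
    using assms by (auto simp: pre_def dest: set_takeWhileD)
  have "takeWhile (\<lambda>u. u \<noteq> v) (filter (\<lambda>u. u \<in> A) \<pi>) = filter (\<lambda>u. u \<in> A) pre" if "v \<in> A" for A
    using that unfolding pre_def by (induction \<pi>) auto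
  then have lat_eq: "(if v \<in> A then lat d r \<pi> A v else 0) = h (A \<inter> insert v (set pre))" for A
    by (auto simp: lat_def h_def intro!: arg_cong[where f="path_len d"] filter_cong)
  have "(\<Sum>A\<in>Pow C. act_prob C p A * (if v \<in> A then lat d r \<pi> A v else 0))
      = (\<Sum>A\<in>Pow C. act_prob C p A * h (A \<inter> insert v (set pre)))"
    by (simp only: lat_eq)
  also have "\<dots> = (\<Sum>B\<in>Pow (insert v (set pre)). act_prob (insert v (set pre)) p B * h B)"
    by (rule sum_act_prob_marginal) (use assms pre in auto)
  also have "\<dots> = (1 - p v) * (\<Sum>B\<in>Pow (set pre). act_prob (set pre) p B * h B)
      + p v * (\<Sum>B\<in>Pow (set pre). act_prob (set pre) p B * h (insert v B))"
    by (rule sum_act_prob_insert[OF finite_set v])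
  also have "(\<Sum>B\<in>Pow (set pre). act_prob (set pre) p B * h B) = 0"
    by (rule sum.neutral) (use v in \<open>auto simp: h_def\<close>)
  also have "(\<Sum>B\<in>Pow (set pre). act_prob (set pre) p B * h (insert v B))
      = (\<Sum>B\<in>Pow (set pre). act_prob (set pre) p B * path_len d (r # filter (\<lambda>u. u \<in> B) pre @ [v]))"
  proof (intro sum.cong refl)
    fix B
    have "filter (\<lambda>u. u \<in> insert v B) pre = filter (\<lambda>u. u \<in> B) pre"
      using v by (intro filter_cong) auto
    then show "act_prob (set pre) p B * h (insert v B)
        = act_prob (set pre) p B * path_len d (r # filter (\<lambda>u. u \<in> B) pre @ [v])"
      by (simp add: h_def)
  qed
  also have "\<dots> = cond_lat d r p \<pi> v"
    using sum_act_prob_path_len[OF pre(1)] by (simp add: cond_lat_def pre_def)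
  finally show ?thesis by simp
qed

lemma exp_lat_eq_sum_cond_lat:
  assumes "finite C" "distinct \<pi>" "set \<pi> \<subseteq> C"
  shows "exp_lat d r C p \<pi> = (\<Sum>v\<in>set \<pi>. p v * cond_lat d r p \<pi> v)"
proof -
  have "exp_lat d r C p \<pi> = (\<Sum>A\<in>Pow C. act_prob C p A * (\<Sum>v\<in>set \<pi>. if v \<in> A then lat d r \<pi> A v else 0))"
    unfolding exp_lat_def by (intro sum.cong refl, subst Int_commute) (simp add: sum.inter_restrict)
  also have "\<dots> = (\<Sum>v\<in>set \<pi>. \<Sum>A\<in>Pow C. act_prob C p A * (if v \<in> A then lat d r \<pi> A v else 0))"
    by (simp add: sum_distrib_left sum.swap[of _ "set \<pi>"])
  also have "\<dots> = (\<Sum>v\<in>set \<pi>. p v * cond_lat d r p \<pi> v)"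
    using sum_act_prob_lat[OF assms] by simp
  finally show ?thesis .
qed

lemma cond_lat_cong: "\<forall>w\<in>set \<pi>. p w = p' w \<Longrightarrow> cond_lat d r p \<pi> v = cond_lat d r p' \<pi> v"
  unfolding cond_lat_def by (auto dest!: set_takeWhileD intro!: arg_cong[where f="\<lambda>xs. exp_path d r xs v"])

section \<open>Thinning the activation probabilities\<close>

fun exp_first_leg :: "('b \<Rightarrow> 'b \<Rightarrow> real) \<Rightarrow> 'b \<Rightarrow> ('b \<times> real) list \<Rightarrow> 'b \<Rightarrow> real" where
  "exp_first_leg d s [] v = d s v"
| "exp_first_leg d s ((x, a) # xs) v = a * d s x + (1 - a) * exp_first_leg d s xs v"

lemma exp_path_sub_first_leg:
  "exp_path d s xs v - exp_first_leg d s xs v = exp_path d s' xs v - exp_first_leg d s' xs v"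
proof (induction xs arbitrary: s s')
  case (Cons y xs)
  obtain x a where y: "y = (x, a)" by force
  have "exp_path d s (y # xs) v - exp_first_leg d s (y # xs) v
      = a * exp_path d x xs v + (1 - a) * (exp_path d s xs v - exp_first_leg d s xs v)" for s
    by (simp add: y algebra_simps)
  then show ?case using Cons.IH[of s s'] by simp
qed simp

context
  fixes V :: "'b set" and d :: "'b \<Rightarrow> 'b \<Rightarrow> real"
  assumes metric: "metric_on V d"
begin

lemma metric_nonneg: "u \<in> V \<Longrightarrow> v \<in> V \<Longrightarrow> 0 \<le> d u v"
  using metric by (simp add: metric_on_def)

lemma metric_triangle: "u \<in> V \<Longrightarrow> v \<in> V \<Longrightarrow> w \<in> V \<Longrightarrow> d u w \<le> d u v + d v w"
  using metric by (simp add: metric_on_def)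

lemma exp_path_ge_dist:
  assumes "s \<in> V" "v \<in> V" "set us \<subseteq> V" "p ` set us \<subseteq> {0..1}"
  shows "d s v \<le> exp_path d s (map (\<lambda>u. (u, p u)) us) v"
  using assms
proof (induction us arbitrary: s)
  case Nil
  then show ?case by simp
next
  case (Cons x us)
  let ?G = "\<lambda>s. exp_path d s (map (\<lambda>u. (u, p u)) us) v"
  have "d s v \<le> d s x + ?G x"
    using metric_triangle[of s x v] Cons.IH[of x] Cons.prems by force
  moreover have "d s v \<le> ?G s" using Cons by simp
  moreover have "0 \<le> p x" "p x \<le> 1" using Cons.prems by auto
  ultimately have "p x * d s v + (1 - p x) * d s v \<le> p x * (d s x + ?G x) + (1 - p x) * ?G s"
    by (intro add_mono mult_left_mono) auto
  then show ?case by (simp add: algebra_simps)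
qed

lemma exp_path_le_detour:
  assumes "s \<in> V" "x \<in> V" "v \<in> V" "set us \<subseteq> V" "p ` set us \<subseteq> {0..1}"
  shows "exp_path d s (map (\<lambda>u. (u, p u)) us) v \<le> d s x + exp_path d x (map (\<lambda>u. (u, p u)) us) v"
  using assms
proof (induction us arbitrary: s x)
  case Nil
  then show ?case using metric_triangle by simp
next
  case (Cons y us)
  let ?G = "\<lambda>s. exp_path d s (map (\<lambda>u. (u, p u)) us) v"
  have "d s y + ?G y \<le> d s x + (d x y + ?G y)"
    using metric_triangle[of s x y] Cons.prems by simp
  moreover have "?G s \<le> d s x + ?G x" using Cons by simp
  moreover have "0 \<le> p y" "p y \<le> 1" using Cons.prems by auto
  ultimately have "p y * (d s y + ?G y) + (1 - p y) * ?G s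
      \<le> p y * (d s x + (d x y + ?G y)) + (1 - p y) * (d s x + ?G x)"
    by (intro add_mono[OF mult_left_mono mult_left_mono]) auto
  then show ?case by (simp add: algebra_simps)
qed

lemma exp_first_leg_nonneg:
  assumes "s \<in> V" "v \<in> V" "set us \<subseteq> V" "p ` set us \<subseteq> {0..1}"
  shows "0 \<le> exp_first_leg d s (map (\<lambda>u. (u, p u)) us) v"
  using assms by (induction us) (auto simp: metric_nonneg)

text \<open>The first-leg term strengthens the induction hypothesis: beyond its first leg the walk does
  not depend on its start (\<open>exp_path_sub_first_leg\<close>), so only first legs need to be compared.\<close>
lemma exp_path_thinning:
  assumes \<beta>: "0 \<le> \<beta>" "\<beta> \<le> 1"
    and sv: "s \<in> V" "v \<in> V" and us: "set us \<subseteq> V" "p ` set us \<subseteq> {0..1}" "q ` set us \<subseteq> {0..1}"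
    and pq: "\<forall>u\<in>set us. \<beta> * p u \<le> q u"
  shows "\<beta>\<^sup>2 * exp_path d s (map (\<lambda>u. (u, p u)) us) v
           + (\<beta> - \<beta>\<^sup>2) * exp_first_leg d s (map (\<lambda>u. (u, p u)) us) v
         \<le> exp_path d s (map (\<lambda>u. (u, q u)) us) v"
  using sv(1) us pq
proof (induction us arbitrary: s)
  case Nil
  have "(\<beta>\<^sup>2 + (\<beta> - \<beta>\<^sup>2)) * d s v \<le> 1 * d s v"
    using \<beta> metric_nonneg[OF Nil(1) sv(2)] by (intro mult_right_mono) auto
  then show ?case by (simp add: algebra_simps)
next
  case (Cons x us)
  let ?P = "map (\<lambda>u. (u, p u)) us" and ?Q = "map (\<lambda>u. (u, q u)) us"
  let ?b = "\<beta> * p x"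
  define Gs Gx Ds Dx where "Gs = exp_path d s ?P v" "Gx = exp_path d x ?P v"
    "Ds = exp_first_leg d s ?P v" "Dx = exp_first_leg d x ?P v"
  define Hs Hx where "Hs = exp_path d s ?Q v" "Hx = exp_path d x ?Q v"
  have x: "x \<in> V" "0 \<le> p x" "p x \<le> 1" "?b \<le> q x" "q x \<le> 1" using Cons.prems by auto
  have b: "0 \<le> ?b" "?b \<le> 1" using \<beta> x by (auto intro: mult_le_one)
  have IHx: "\<beta>\<^sup>2 * Gx + (\<beta> - \<beta>\<^sup>2) * Dx \<le> Hx" and IHs: "\<beta>\<^sup>2 * Gs + (\<beta> - \<beta>\<^sup>2) * Ds \<le> Hs"
    using Cons x unfolding Gs_Gx_Ds_Dx_def Hs_Hx_def by auto
  have detour: "Hs \<le> d s x + Hx"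
    unfolding Hs_Hx_def using Cons.prems x sv by (intro exp_path_le_detour) auto
  have indep: "Gx - Dx = Gs - Ds"
    unfolding Gs_Gx_Ds_Dx_def by (rule exp_path_sub_first_leg)
  have Ds: "0 \<le> Ds"
    unfolding Gs_Gx_Ds_Dx_def using Cons.prems sv by (intro exp_first_leg_nonneg) auto
  have "?b * (d s x + (\<beta>\<^sup>2 * Gx + (\<beta> - \<beta>\<^sup>2) * Dx)) + (1 - ?b) * (\<beta>\<^sup>2 * Gs + (\<beta> - \<beta>\<^sup>2) * Ds)
      \<le> ?b * (d s x + Hx) + (1 - ?b) * Hs"
    using IHx IHs b by (intro add_mono[OF mult_left_mono mult_left_mono]) auto
  also have "\<dots> \<le> q x * (d s x + Hx) + (1 - q x) * Hs"
  proof -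
    have "0 \<le> (q x - ?b) * (d s x + Hx - Hs)" using x detour by simp
    then show ?thesis by (simp add: algebra_simps)
  qed
  finally have step: "?b * (d s x + (\<beta>\<^sup>2 * Gx + (\<beta> - \<beta>\<^sup>2) * Dx)) + (1 - ?b) * (\<beta>\<^sup>2 * Gs + (\<beta> - \<beta>\<^sup>2) * Ds)
      \<le> q x * (d s x + Hx) + (1 - q x) * Hs" .
  have Gx: "Gx = Dx + Gs - Ds" using indep by simp
  have "?b * (d s x + (\<beta>\<^sup>2 * Gx + (\<beta> - \<beta>\<^sup>2) * Dx)) + (1 - ?b) * (\<beta>\<^sup>2 * Gs + (\<beta> - \<beta>\<^sup>2) * Ds)
      = \<beta>\<^sup>2 * (p x * (d s x + Gx) + (1 - p x) * Gs) + (\<beta> - \<beta>\<^sup>2) * (p x * d s x + (1 - p x) * Ds)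
        + p x * \<beta> * (1 - \<beta>) * Ds"
    unfolding Gx by (simp add: algebra_simps power2_eq_square)
  moreover have "0 \<le> p x * \<beta> * (1 - \<beta>) * Ds" using x \<beta> Ds by simp
  ultimately show ?case using step unfolding Gs_Gx_Ds_Dx_def Hs_Hx_def by simp
qed

lemma cond_lat_thinning:
  assumes "0 \<le> \<beta>" "\<beta> \<le> 1" "r \<in> V" "v \<in> V" "set \<pi> \<subseteq> V"
    "p ` set \<pi> \<subseteq> {0..1}" "q ` set \<pi> \<subseteq> {0..1}" "\<forall>u\<in>set \<pi>. \<beta> * p u \<le> q u"
  shows "\<beta>\<^sup>2 * cond_lat d r p \<pi> v \<le> cond_lat d r q \<pi> v"
proof -
  let ?pre = "takeWhile (\<lambda>u. u \<noteq> v) \<pi>"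
  have pre: "set ?pre \<subseteq> set \<pi>" by (auto dest: set_takeWhileD)
  have "0 \<le> \<beta> - \<beta>\<^sup>2" using assms(1,2) by (simp add: power2_eq_square mult_left_le)
  then have "0 \<le> (\<beta> - \<beta>\<^sup>2) * exp_first_leg d r (map (\<lambda>u. (u, p u)) ?pre) v"
    using assms pre by (intro mult_nonneg_nonneg exp_first_leg_nonneg) (auto simp: image_subset_iff)
  moreover have "\<beta>\<^sup>2 * exp_path d r (map (\<lambda>u. (u, p u)) ?pre) v
        + (\<beta> - \<beta>\<^sup>2) * exp_first_leg d r (map (\<lambda>u. (u, p u)) ?pre) v
      \<le> exp_path d r (map (\<lambda>u. (u, q u)) ?pre) v"
    using assms pre by (intro exp_path_thinning) (auto simp: image_subset_iff)
  ultimately show ?thesis unfolding cond_lat_def by linarith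
qed

lemma cond_lat_ge_dist:
  assumes "r \<in> V" "v \<in> V" "set \<pi> \<subseteq> V" "p ` set \<pi> \<subseteq> {0..1}"
  shows "d r v \<le> cond_lat d r p \<pi> v"
  unfolding cond_lat_def using assms by (intro exp_path_ge_dist) (auto dest!: set_takeWhileD)

end

section \<open>Groups of co-located copies\<close>

lemma exp_path_J_dist:
  "exp_path (J_dist d) s xs y = exp_path d (fst s) (map (\<lambda>(x, a). (fst x, a)) xs) (fst y)"
  by (induction xs arbitrary: s) (auto simp: J_dist_def)

lemma exp_path_append_at_target:
  assumes "\<forall>(x, a)\<in>set ys. x = v" "d v v = 0"
  shows "exp_path d s (xs @ ys) v = exp_path d s xs v"
proof -
  have "exp_path d s ys v = d s v" for s
    using assms(1) by (induction ys arbitrary: s) (auto simp: assms(2) algebra_simps)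
  then show ?thesis by (induction xs arbitrary: s) auto
qed

lemma exp_path_replicate:
  assumes "d u u = 0" "0 < k"
  shows "exp_path d s (replicate k (u, c) @ rest) v = exp_path d s ((u, 1 - (1 - c) ^ k) # rest) v"
  using assms(2)
proof (induction k arbitrary: s)
  case (Suc k)
  show ?case
  proof (cases "k = 0")
    case False
    let ?R = "replicate k (u, c) @ rest" and ?E = "\<lambda>s. exp_path d s rest v"
    have IH: "exp_path d s ?R v = (1 - (1 - c) ^ k) * (d s u + ?E u) + (1 - c) ^ k * ?E s" for s
      using Suc.IH False by (simp add: algebra_simps)
    have "exp_path d s (replicate (Suc k) (u, c) @ rest) v
        = c * (d s u + exp_path d u ?R v) + (1 - c) * exp_path d s ?R v"
      by simp
    also have "\<dots> = c * (d s u + ?E u) + (1 - c) * ((1 - (1 - c) ^ k) * (d s u + ?E u) + (1 - c) ^ k * ?E s)"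
      unfolding IH using assms(1) by (simp add: algebra_simps)
    also have "\<dots> = exp_path d s ((u, 1 - (1 - c) ^ Suc k) # rest) v"
      by (simp add: algebra_simps)
    finally show ?thesis .
  qed simp
qed simp

lemma exp_path_concat_replicate:
  assumes "\<forall>u\<in>set us. d u u = 0 \<and> 0 < k u"
  shows "exp_path d s (concat (map (\<lambda>u. replicate (k u) (u, c)) us)) v
       = exp_path d s (map (\<lambda>u. (u, 1 - (1 - c) ^ k u)) us) v"
  using assms
proof (induction us arbitrary: s)
  case (Cons u us)
  then show ?case by (simp add: exp_path_replicate)
qed simp

lemma takeWhile_concat_blocks:
  assumes "distinct \<sigma>" "u \<in> set \<sigma>" "y \<in> set (B u)" "\<forall>w\<in>set \<sigma>. \<forall>z\<in>set (B w). fst z = w"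
  shows "takeWhile (\<lambda>z. z \<noteq> y) (concat (map B \<sigma>))
       = concat (map B (takeWhile (\<lambda>w. w \<noteq> u) \<sigma>)) @ takeWhile (\<lambda>z. z \<noteq> y) (B u)"
  using assms
proof (induction \<sigma>)
  case (Cons w \<sigma>)
  show ?case
  proof (cases "w = u")
    case False
    have "fst y = u" "\<forall>z\<in>set (B w). fst z = w" using Cons.prems by auto
    with False have "\<forall>z\<in>set (B w). z \<noteq> y" by auto
    then show ?thesis using Cons False by (simp add: takeWhile_append2)
  qed (use Cons.prems in simp)
qed simp

lemma cond_lat_J_blocks:
  assumes "distinct \<sigma>" "u \<in> set \<sigma>" "y \<in> set (B u)"
    and blocks: "\<forall>w\<in>set \<sigma>. B w \<noteq> [] \<and> (\<forall>z\<in>set (B w). fst z = w) \<and> d w w = 0"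
  shows "cond_lat (J_dist d) s (\<lambda>_. c) (concat (map B \<sigma>)) y
       = cond_lat d (fst s) (\<lambda>w. 1 - (1 - c) ^ length (B w)) \<sigma> u"
proof -
  let ?pre = "takeWhile (\<lambda>w. w \<noteq> u) \<sigma>"
  have pre: "set ?pre \<subseteq> set \<sigma>" by (auto dest: set_takeWhileD)
  then have pre_blocks: "\<forall>w\<in>set ?pre. d w w = 0 \<and> 0 < length (B w)"
    using blocks by auto
  have "map (\<lambda>z. (fst z, c)) (B w) = map (\<lambda>_. (w, c)) (B w)" if "w \<in> set \<sigma>" for w
    using blocks that by (intro map_cong) auto
  then have "map (\<lambda>z. (fst z, c)) (B w) = replicate (length (B w)) (w, c)" if "w \<in> set \<sigma>" for w
    using that by (simp add: map_replicate_const)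
  with pre have "map (\<lambda>z. (fst z, c)) (concat (map B ?pre))
      = concat (map (\<lambda>w. replicate (length (B w)) (w, c)) ?pre)"
    by (auto simp: map_concat intro!: arg_cong[where f=concat] map_cong)
  moreover have "\<forall>(x, a)\<in>set (map (\<lambda>z. (fst z, c)) (takeWhile (\<lambda>z. z \<noteq> y) (B u))). x = u"
    using blocks assms(2) by (auto dest: set_takeWhileD)
  ultimately show ?thesis
    using blocks assms takeWhile_concat_blocks[of \<sigma> u y B]
    by (simp add: cond_lat_def exp_path_J_dist exp_path_append_at_target comp_def case_prod_beta
        exp_path_concat_replicate[where d=d and k="\<lambda>w. length (B w)", OF pre_blocks])
qed

lemma exp_lat_J_blocks:
  assumes "distinct \<sigma>" "distinct (concat (map B \<sigma>))" "finite C" "set (concat (map B \<sigma>)) \<subseteq> C"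
    and blocks: "\<forall>u\<in>set \<sigma>. B u \<noteq> [] \<and> (\<forall>y\<in>set (B u). fst y = u) \<and> d u u = 0"
  shows "exp_lat (J_dist d) s C (\<lambda>_. c) (concat (map B \<sigma>))
       = (\<Sum>u\<in>set \<sigma>. real (length (B u)) * c * cond_lat d (fst s) (\<lambda>w. 1 - (1 - c) ^ length (B w)) \<sigma> u)"
proof -
  let ?L = "concat (map B \<sigma>)" and ?q = "\<lambda>w. 1 - (1 - c) ^ length (B w)"
  have "exp_lat (J_dist d) s C (\<lambda>_. c) ?L = (\<Sum>y\<in>set ?L. c * cond_lat (J_dist d) s (\<lambda>_. c) ?L y)"
    using assms by (intro exp_lat_eq_sum_cond_lat)
  also have "\<dots> = sum_list (map (\<lambda>u. sum_list (map (\<lambda>y. c * cond_lat (J_dist d) s (\<lambda>_. c) ?L y) (B u))) \<sigma>)"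
  proof -
    have "sum_list (map f (concat (map B \<sigma>))) = sum_list (map (\<lambda>u. sum_list (map f (B u))) \<sigma>)" for f
      by (induction \<sigma>) auto
    then show ?thesis by (simp only: sum_list_distinct_conv_sum_set[OF assms(2), symmetric])
  qed
  also have "\<dots> = sum_list (map (\<lambda>u. real (length (B u)) * c * cond_lat d (fst s) ?q \<sigma> u) \<sigma>)"
    using cond_lat_J_blocks[where d=d and B=B, OF assms(1) _ _ blocks]
    by (auto intro!: arg_cong[where f=sum_list] map_cong simp: sum_list_triv cong: map_cong)
  also have "\<dots> = (\<Sum>u\<in>set \<sigma>. real (length (B u)) * c * cond_lat d (fst s) ?q \<sigma> u)"
    by (rule sum_list_distinct_conv_sum_set[OF assms(1)])
  finally show ?thesis .
qed

lemma consecutive_ConsD: "consecutive (x # L) \<Longrightarrow> consecutive L"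
  unfolding consecutive_def
proof (intro allI impI)
  fix i j k
  assume A: "\<forall>i j k. i \<le> j \<and> j \<le> k \<and> k < length (x # L) \<and> fst ((x # L) ! i) = fst ((x # L) ! k)
            \<longrightarrow> fst ((x # L) ! j) = fst ((x # L) ! i)"
    and ijk: "i \<le> j \<and> j \<le> k \<and> k < length L \<and> fst (L ! i) = fst (L ! k)"
  show "fst (L ! j) = fst (L ! i)" using A[rule_format, of "Suc i" "Suc j" "Suc k"] ijk by simp
qed

lemma consecutive_Cons_hd:
  assumes "consecutive (x # L)" "fst x \<in> fst ` set L"
  shows "fst (hd L) = fst x"
proof -
  obtain k where k: "k < length L" "fst (L ! k) = fst x"
    using assms(2) by (metis imageE in_set_conv_nth)
  then have "fst (L ! 0) = fst x"
    using assms(1)[unfolded consecutive_def, rule_format, of 0 1 "Suc k"] by simp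
  then show ?thesis using k by (cases L) auto
qed

lemma consecutive_concat_groups:
  "consecutive L \<Longrightarrow> concat (map (\<lambda>u. filter (\<lambda>y. fst y = u) L) (remdups (map fst L))) = L"
proof (induction L)
  case (Cons x L)
  define G where "G L u = filter (\<lambda>y. fst y = u) L" for L :: "('a \<times> nat) list" and u
  have IH: "concat (map (G L) (remdups (map fst L))) = L"
    using Cons consecutive_ConsD unfolding G_def by blast
  have own: "G (x # L) (fst x) = x # G L (fst x)" and other: "u \<noteq> fst x \<Longrightarrow> G (x # L) u = G L u" for u
    by (simp_all add: G_def)
  have "concat (map (G (x # L)) (remdups (map fst (x # L)))) = x # L"
  proof (cases "fst x \<in> fst ` set L")
    case False
    then have "G L (fst x) = []" by (auto simp: G_def filter_empty_conv image_iff)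
    moreover have M: "map (G (x # L)) (remdups (map fst L)) = map (G L) (remdups (map fst L))"
    proof (intro map_cong refl other)
      show "u \<in> set (remdups (map fst L)) \<Longrightarrow> u \<noteq> fst x" for u using False by force
    qed
    ultimately show ?thesis using False IH own by (simp add: M)
  next
    case True
    then obtain w \<sigma> where \<sigma>: "remdups (map fst L) = w # \<sigma>" by (cases "remdups (map fst L)") auto
    have "w \<in> fst ` set L" using \<sigma> by (metis list.set_intros(1) set_map set_remdups)
    then have ne: "G L w \<noteq> []" by (auto simp: G_def filter_empty_conv image_iff)
    have "G L w @ concat (map (G L) \<sigma>) = L" using IH \<sigma> by simp
    then have "hd L = hd (G L w)" using ne by (metis hd_append2)
    then have "fst (hd L) = w" using hd_in_set[OF ne] by (simp add: G_def)
    then have w: "w = fst x" using consecutive_Cons_hd[OF Cons.prems True] by simp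
    have "w \<notin> set \<sigma>" using \<sigma> by (metis distinct.simps(2) distinct_remdups)
    then have M: "map (G (x # L)) \<sigma> = map (G L) \<sigma>" using w by (intro map_cong refl other) auto
    show ?thesis using True IH \<sigma> w own by (simp add: M)
  qed
  then show ?case unfolding G_def[abs_def] .
qed simp

lemma finite_master_tours: "finite C \<Longrightarrow> finite (master_tours C)"
  unfolding master_tours_def by (rule finite_subset[OF _ finite_subset_distinct]) auto

lemma opt_le_exp_lat: "finite C \<Longrightarrow> \<pi> \<in> master_tours C \<Longrightarrow> opt d r C p \<le> exp_lat d r C p \<pi>"
  unfolding opt_def by (intro Min_le) (auto simp: finite_master_tours)

lemma opt_attained:
  assumes "finite C"
  obtains \<pi> where "\<pi> \<in> master_tours C" "opt d r C p = exp_lat d r C p \<pi>"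
proof -
  have "master_tours C \<noteq> {}" using finite_distinct_list[OF assms] by (auto simp: master_tours_def)
  then have "opt d r C p \<in> exp_lat d r C p ` master_tours C"
    unfolding opt_def using finite_master_tours[OF assms] by (intro Min_in) auto
  then show ?thesis using that by blast
qed

lemma path_len_nonneg: "\<forall>x\<in>set xs. \<forall>y\<in>set xs. 0 \<le> d x y \<Longrightarrow> 0 \<le> path_len d xs"
  by (induction d xs rule: path_len.induct) auto

lemma exp_lat_nonneg:
  assumes "\<forall>x\<in>insert r C. \<forall>y\<in>insert r C. 0 \<le> d x y" "\<forall>v\<in>C. 0 \<le> p v \<and> p v \<le> 1" "set \<pi> \<subseteq> C"
  shows "0 \<le> exp_lat d r C p \<pi>"
  unfolding exp_lat_def act_prob_def lat_def using assms(1,2) subsetD[OF assms(3)]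
  by (intro sum_nonneg mult_nonneg_nonneg prod_nonneg path_len_nonneg) (auto dest!: set_takeWhileD)

lemma opt_nonneg:
  assumes "finite C" "\<forall>x\<in>insert r C. \<forall>y\<in>insert r C. 0 \<le> d x y" "\<forall>v\<in>C. 0 \<le> p v \<and> p v \<le> 1"
  shows "0 \<le> opt d r C p"
proof -
  obtain \<pi> where "\<pi> \<in> master_tours C" "opt d r C p = exp_lat d r C p \<pi>"
    using opt_attained[OF assms(1)] .
  then show ?thesis using exp_lat_nonneg[OF assms(2,3)] by (simp add: master_tours_def)
qed

lemma one_minus_power_le:
  fixes c :: real
  assumes "0 \<le> c" "c \<le> 1"
  shows "1 - (1 - c) ^ k \<le> k * c"
  using Bernoulli_inequality[of "- c" k] assms by simp

lemma half_le_one_minus_power: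
  fixes c x :: real
  assumes "0 \<le> c" "c \<le> 1" "0 \<le> x" "x \<le> 1" "x \<le> k * c"
  shows "x / 2 \<le> 1 - (1 - c) ^ k"
proof -
  have "(1 - c) ^ k \<le> exp (- c) ^ k"
    using assms exp_ge_add_one_self[of "- c"] by (intro power_mono) auto
  also have "\<dots> = exp (- (k * c))" by (simp add: exp_of_nat_mult[symmetric])
  also have "\<dots> \<le> exp (- x)" using assms by simp
  also have "\<dots> \<le> 1 / (1 + x)"
    using exp_ge_add_one_self[of x] assms by (simp add: exp_minus divide_inverse le_imp_inverse_le)
  also have "\<dots> \<le> 1 - x / 2" using assms by (simp add: field_simps mult_left_le)
  finally show ?thesis by simp
qed

lemma four_le_e_ratio_pow: "(4::real) \<le> (exp 1 / (exp 1 - 1)) ^ 4"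
proof -
  have "(3 / 2 :: real) \<le> exp 1 / (exp 1 - 1)" using exp_le by (simp add: field_simps)
  then have "(3 / 2 :: real) ^ 4 \<le> (exp 1 / (exp 1 - 1)) ^ 4" by (rule power_mono) simp
  moreover have "(4::real) \<le> (3 / 2) ^ 4" by (simp add: power_divide)
  ultimately show ?thesis by linarith
qed

lemma one_plus_inverse_cube_tendsto: "(\<lambda>n. (1 + 1 / real n) ^ 3 - 1) \<longlonglongrightarrow> (0::real)"
proof -
  have "(\<lambda>n. (1 + inverse (real n)) ^ 3 - 1) \<longlonglongrightarrow> (1 + 0) ^ 3 - (1::real)"
    by (intro tendsto_intros lim_inverse_n)
  then show ?thesis by (simp add: divide_inverse)
qed

section \<open>The heavy vertices and the uniform instance\<close>

locale heavy_instance =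
  fixes V :: "'a set" and d :: "'a \<Rightarrow> 'a \<Rightarrow> real" and r :: 'a and p :: "'a \<Rightarrow> real"
  assumes finite_V: "finite V" and root: "r \<in> V" and metric: "metric_on V d"
    and prob: "\<forall>v\<in>V - {r}. 0 \<le> p v \<and> p v \<le> 1"
    and heavy_nonempty: "heavy V r p \<noteq> {}"
begin

abbreviation n where "n \<equiv> card V"
abbreviation X where "X \<equiv> heavy V r p"
abbreviation pJ where "pJ \<equiv> J_prob V r p"
abbreviation t where "t \<equiv> J_copies V r p"
abbreviation CJ where "CJ \<equiv> J_clients V r p"

definition q :: "'a \<Rightarrow> real" where
  "q u = 1 - (1 - pJ) ^ t u"

lemma n_pos: "0 < real n"
  using finite_V root card_gt_0_iff by auto

lemma heavy_subset: "X \<subseteq> V - {r}"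
  by (auto simp: heavy_def)

lemma finite_heavy: "finite X"
  using finite_subset[OF heavy_subset] finite_V by auto

lemma heavy_prob: "u \<in> X \<Longrightarrow> 0 < p u \<and> p u \<le> 1"
  using n_pos prob heavy_subset
  by (auto simp: heavy_def intro: less_le_trans[of 0 "1 / real n ^ 2"])

lemma heavy_vertex:
  assumes "u \<in> X" shows "u \<in> V" "u \<noteq> r" "0 \<le> p u" "p u \<le> 1"
  using assms heavy_subset heavy_prob[OF assms] by auto

lemma J_prob_le: "u \<in> X \<Longrightarrow> pJ \<le> p u / n"
  using finite_heavy n_pos by (auto simp: J_prob_def divide_right_mono)

lemma J_prob_pos: "0 < pJ"
proof -
  have "Min (p ` X) \<in> p ` X" using finite_heavy heavy_nonempty by (intro Min_in) auto
  then show ?thesis using heavy_prob n_pos by (auto simp: J_prob_def)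
qed

lemma J_prob_le_one: "pJ \<le> 1"
proof -
  obtain u where u: "u \<in> X" using heavy_nonempty by auto
  have "p u / n \<le> p u" using heavy_prob[OF u] n_pos by (simp add: divide_le_eq mult_le_cancel_left1)
  then show ?thesis using J_prob_le[OF u] heavy_prob[OF u] by linarith
qed

lemma J_copies_eq:
  assumes "u \<in> X" shows "real (t u) = \<lceil>p u / pJ\<rceil>"
proof -
  have "0 \<le> p u / pJ" using heavy_prob[OF assms] J_prob_pos by simp
  then have "0 \<le> \<lceil>p u / pJ\<rceil>" by simp
  then show ?thesis by (simp add: J_copies_def)
qed

lemma J_copies_lower:
  assumes "u \<in> X" shows "p u \<le> t u * pJ"
proof -
  have "p u / pJ \<le> t u" using J_copies_eq[OF assms] by simp
  then show ?thesis using J_prob_pos by (simp add: divide_le_eq)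
qed

lemma J_copies_upper: "u \<in> X \<Longrightarrow> t u * pJ \<le> (1 + 1 / n) * p u"
proof -
  assume u: "u \<in> X"
  have "t u * pJ \<le> (p u / pJ + 1) * pJ"
    using J_copies_eq[OF u] J_prob_pos by (intro mult_right_mono) linarith+
  also have "\<dots> = p u + pJ" using J_prob_pos by (simp add: field_simps)
  also have "\<dots> \<le> (1 + 1 / n) * p u" using J_prob_le[OF u] by (simp add: algebra_simps)
  finally show ?thesis .
qed

lemma J_copies_pos: "u \<in> X \<Longrightarrow> 0 < t u"
  using J_copies_lower[of u] heavy_prob[of u] J_prob_pos by (auto intro: ccontr)

lemma q_range: "0 \<le> q u" "q u \<le> 1"
  using J_prob_pos J_prob_le_one by (simp_all add: q_def power_le_one)

lemma q_lower:
  assumes "u \<in> X" shows "p u / 2 \<le> q u"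
  unfolding q_def using J_prob_pos J_prob_le_one heavy_prob[OF assms] J_copies_lower[OF assms]
  by (intro half_le_one_minus_power) auto

lemma q_upper: "u \<in> X \<Longrightarrow> q u \<le> t u * pJ"
  unfolding q_def using J_prob_pos J_prob_le_one by (intro one_minus_power_le) auto

lemma J_clients_eq: "CJ = (SIGMA u:X. {1..t u})"
  by (simp add: J_clients_def)

lemma finite_J_clients: "finite CJ"
  using finite_heavy by (simp add: J_clients_eq)

lemma cond_lat_le_four:
  assumes "set \<sigma> \<subseteq> X" "u \<in> X"
  shows "cond_lat d r p \<sigma> u \<le> 4 * cond_lat d r q \<sigma> u"
proof -
  have "(1 / 2)\<^sup>2 * cond_lat d r p \<sigma> u \<le> cond_lat d r q \<sigma> u"
    using assms root q_lower by (intro cond_lat_thinning[OF metric]) (auto simp: heavy_vertex q_range)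
  then show ?thesis by (simp add: power2_eq_square)
qed

lemma cond_lat_copies_le:
  assumes "set \<sigma> \<subseteq> X" "u \<in> X"
  shows "cond_lat d r q \<sigma> u \<le> (1 + 1 / n)\<^sup>2 * cond_lat d r p \<sigma> u"
proof -
  define \<beta> where "\<beta> = n / (n + 1)"
  have "0 < real n + real n * real n" using n_pos by (intro add_pos_pos mult_pos_pos)
  then have \<beta>: "0 \<le> \<beta>" "\<beta> \<le> 1" "(1 + 1 / n) * \<beta> = 1"
    using n_pos by (simp_all add: \<beta>_def field_simps)
  have "\<beta> * q w \<le> p w" if "w \<in> X" for w
  proof -
    have "q w \<le> (1 + 1 / n) * p w" using q_upper[OF that] J_copies_upper[OF that] by linarith
    then have "\<beta> * q w \<le> \<beta> * ((1 + 1 / n) * p w)" using \<beta> by (intro mult_left_mono)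
    also have "\<dots> = p w" using \<beta>(3) by (simp add: mult.assoc[symmetric] mult.commute[of \<beta>])
    finally show ?thesis .
  qed
  then have "\<beta>\<^sup>2 * cond_lat d r q \<sigma> u \<le> cond_lat d r p \<sigma> u"
    using assms root \<beta> by (intro cond_lat_thinning[OF metric]) (auto simp: heavy_vertex q_range)
  then have "(1 + 1 / n)\<^sup>2 * (\<beta>\<^sup>2 * cond_lat d r q \<sigma> u) \<le> (1 + 1 / n)\<^sup>2 * cond_lat d r p \<sigma> u"
    by (intro mult_left_mono) auto
  then show ?thesis using \<beta>(3) by (simp add: power_mult_distrib[symmetric] mult.assoc[symmetric])
qed

lemma cond_lat_copies_pos:
  assumes "set \<sigma> \<subseteq> X" "u \<in> X"
  shows "0 < cond_lat d r q \<sigma> u"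
proof -
  have "0 \<le> d r u" "d r u \<noteq> 0"
    using metric root heavy_vertex[OF assms(2)] unfolding metric_on_def by auto
  then have "0 < d r u" by simp
  also have "d r u \<le> cond_lat d r q \<sigma> u"
    using assms root by (intro cond_lat_ge_dist[OF metric]) (auto simp: heavy_vertex q_range)
  finally show ?thesis .
qed

lemma exp_lat_J_concat:
  assumes "distinct \<sigma>" "set \<sigma> = X" "distinct (concat (map B \<sigma>))" "set (concat (map B \<sigma>)) \<subseteq> CJ"
    and B: "\<forall>u\<in>X. (\<forall>y\<in>set (B u). fst y = u) \<and> length (B u) = t u"
  shows "exp_lat (J_dist d) (r, 0) CJ (\<lambda>_. pJ) (concat (map B \<sigma>)) = (\<Sum>u\<in>X. t u * pJ * cond_lat d r q \<sigma> u)"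
proof -
  have "\<forall>u\<in>set \<sigma>. B u \<noteq> [] \<and> (\<forall>y\<in>set (B u). fst y = u) \<and> d u u = 0"
    using assms(2) B J_copies_pos heavy_subset metric by (fastforce simp: metric_on_def)
  then have "exp_lat (J_dist d) (r, 0) CJ (\<lambda>_. pJ) (concat (map B \<sigma>))
      = (\<Sum>u\<in>set \<sigma>. real (length (B u)) * pJ * cond_lat d r (\<lambda>w. 1 - (1 - pJ) ^ length (B w)) \<sigma> u)"
    using exp_lat_J_blocks[of \<sigma> B CJ d "(r, 0)" pJ] assms(1,3,4) finite_J_clients by simp
  also have "\<dots> = (\<Sum>u\<in>X. t u * pJ * cond_lat d r q \<sigma> u)"
    using assms(2) B by (intro sum.cong) (auto simp: q_def intro!: cond_lat_cong)
  finally show ?thesis .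
qed

lemma exp_lat_J_consecutive:
  assumes "\<pi>h \<in> master_tours CJ" "consecutive \<pi>h"
  shows "set (remdups (map fst \<pi>h)) = X"
    and "exp_lat (J_dist d) (r, 0) CJ (\<lambda>_. pJ) \<pi>h
       = (\<Sum>u\<in>X. t u * pJ * cond_lat d r q (remdups (map fst \<pi>h)) u)"
proof -
  define \<sigma> where "\<sigma> = remdups (map fst \<pi>h)"
  define G where "G u = filter (\<lambda>y. fst y = u) \<pi>h" for u
  have \<pi>h: "distinct \<pi>h" "set \<pi>h = CJ" using assms(1) by (auto simp: master_tours_def)
  show \<sigma>: "set (remdups (map fst \<pi>h)) = X"
    using \<pi>h J_copies_pos by (force simp: J_clients_eq)
  have concat: "concat (map G \<sigma>) = \<pi>h"
    using consecutive_concat_groups[OF assms(2)] by (simp add: G_def[abs_def] \<sigma>_def)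
  have "length (G u) = t u" if "u \<in> X" for u
  proof -
    have "length (G u) = card ({y. fst y = u} \<inter> CJ)" using \<pi>h by (simp add: G_def distinct_length_filter)
    also have "{y. fst y = u} \<inter> CJ = Pair u ` {1..t u}" using that by (auto simp: J_clients_eq)
    finally show ?thesis by (simp add: card_image inj_on_def)
  qed
  then have "exp_lat (J_dist d) (r, 0) CJ (\<lambda>_. pJ) (concat (map G \<sigma>))
      = (\<Sum>u\<in>X. t u * pJ * cond_lat d r q \<sigma> u)"
    using \<sigma> \<pi>h concat by (intro exp_lat_J_concat) (auto simp: \<sigma>_def G_def)
  then show "exp_lat (J_dist d) (r, 0) CJ (\<lambda>_. pJ) \<pi>h
      = (\<Sum>u\<in>X. t u * pJ * cond_lat d r q (remdups (map fst \<pi>h)) u)"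
    using concat by (simp add: \<sigma>_def)
qed

lemma exp_lat_heavy_tour:
  assumes "distinct \<sigma>" "set \<sigma> = X" "finite C" "X \<subseteq> C"
  shows "exp_lat d r C p \<sigma> = (\<Sum>u\<in>X. p u * cond_lat d r p \<sigma> u)"
  using exp_lat_eq_sum_cond_lat[of C \<sigma> d r p] assms by simp

lemma exp_lat_le_four_J:
  assumes "\<pi>h \<in> master_tours CJ" "consecutive \<pi>h"
  shows "exp_lat d r (V - {r}) p (remdups (map fst \<pi>h)) \<le> 4 * exp_lat (J_dist d) (r, 0) CJ (\<lambda>_. pJ) \<pi>h"
proof -
  let ?\<sigma> = "remdups (map fst \<pi>h)"
  have \<sigma>: "set ?\<sigma> = X" using exp_lat_J_consecutive(1)[OF assms] .
  have "exp_lat d r (V - {r}) p ?\<sigma> = (\<Sum>u\<in>X. p u * cond_lat d r p ?\<sigma> u)"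
    using \<sigma> finite_V heavy_subset by (intro exp_lat_heavy_tour) auto
  also have "\<dots> \<le> (\<Sum>u\<in>X. 4 * (t u * pJ * cond_lat d r q ?\<sigma> u))"
  proof (rule sum_mono)
    fix u assume u: "u \<in> X"
    have "p u * cond_lat d r p ?\<sigma> u \<le> p u * (4 * cond_lat d r q ?\<sigma> u)"
      using cond_lat_le_four[of ?\<sigma> u] \<sigma> u heavy_vertex(3)[OF u] by (intro mult_left_mono) auto
    also have "\<dots> \<le> t u * pJ * (4 * cond_lat d r q ?\<sigma> u)"
      using J_copies_lower[OF u] cond_lat_copies_pos[of ?\<sigma> u] \<sigma> u by (intro mult_right_mono) auto
    finally show "p u * cond_lat d r p ?\<sigma> u \<le> 4 * (t u * pJ * cond_lat d r q ?\<sigma> u)" by simp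
  qed
  also have "\<dots> = 4 * exp_lat (J_dist d) (r, 0) CJ (\<lambda>_. pJ) \<pi>h"
    using exp_lat_J_consecutive(2)[OF assms] by (simp add: sum_distrib_left)
  finally show ?thesis .
qed

lemma exp_lat_J_pos:
  assumes "\<pi>h \<in> master_tours CJ" "consecutive \<pi>h"
  shows "0 < exp_lat (J_dist d) (r, 0) CJ (\<lambda>_. pJ) \<pi>h"
  unfolding exp_lat_J_consecutive(2)[OF assms]
  using finite_heavy heavy_nonempty J_copies_pos J_prob_pos cond_lat_copies_pos exp_lat_J_consecutive(1)[OF assms]
  by (intro sum_pos mult_pos_pos) auto

lemma opt_J_le:
  "opt (J_dist d) (r, 0) CJ (\<lambda>_. pJ) \<le> (1 + 1 / n) ^ 3 * opt d r X p"
proof -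
  obtain \<tau> where "\<tau> \<in> master_tours X" and opt: "opt d r X p = exp_lat d r X p \<tau>"
    using opt_attained[OF finite_heavy] .
  then have \<tau>: "distinct \<tau>" "set \<tau> = X" by (auto simp: master_tours_def)
  define B where "B u = map (Pair u) [1..<Suc (t u)]" for u
  have set_B: "set (B u) = Pair u ` {1..t u}" for u
    unfolding B_def by (simp only: set_map set_upt atLeastLessThanSuc_atLeastAtMost)
  have "distinct (concat (map B \<tau>))"
    using \<tau>(1) by (induction \<tau>) (auto simp: B_def distinct_map inj_on_def)
  moreover have "set (concat (map B \<tau>)) = CJ"
    using \<tau>(2) by (auto simp: set_B J_clients_eq)
  ultimately have blowup: "concat (map B \<tau>) \<in> master_tours CJ" by (simp add: master_tours_def)
  then have "opt (J_dist d) (r, 0) CJ (\<lambda>_. pJ) \<le> exp_lat (J_dist d) (r, 0) CJ (\<lambda>_. pJ) (concat (map B \<tau>))"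
    by (intro opt_le_exp_lat finite_J_clients)
  also have "\<dots> = (\<Sum>u\<in>X. t u * pJ * cond_lat d r q \<tau> u)"
    using \<tau> blowup by (intro exp_lat_J_concat) (auto simp: B_def master_tours_def)
  also have "\<dots> \<le> (\<Sum>u\<in>X. (1 + 1 / n) ^ 3 * (p u * cond_lat d r p \<tau> u))"
  proof (rule sum_mono)
    fix u assume u: "u \<in> X"
    have "t u * pJ * cond_lat d r q \<tau> u \<le> ((1 + 1 / n) * p u) * cond_lat d r q \<tau> u"
      using J_copies_upper[OF u] cond_lat_copies_pos[of \<tau> u] \<tau> u by (intro mult_right_mono) auto
    also have "\<dots> \<le> ((1 + 1 / n) * p u) * ((1 + 1 / n)\<^sup>2 * cond_lat d r p \<tau> u)"
      using cond_lat_copies_le[of \<tau> u] \<tau> u heavy_vertex(3)[OF u] n_pos by (intro mult_left_mono) auto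
    finally show "t u * pJ * cond_lat d r q \<tau> u \<le> (1 + 1 / n) ^ 3 * (p u * cond_lat d r p \<tau> u)"
      by (simp add: power2_eq_square power3_eq_cube mult_ac)
  qed
  also have "\<dots> = (1 + 1 / n) ^ 3 * opt d r X p"
    using opt \<tau> finite_heavy exp_lat_heavy_tour[of \<tau> X] by (simp add: sum_distrib_left)
  finally show ?thesis .
qed

lemma opt_heavy_nonneg: "0 \<le> opt d r X p"
  using finite_heavy root heavy_vertex by (intro opt_nonneg) (auto simp: metric_nonneg[OF metric])

lemma opt_J_nonneg: "0 \<le> opt (J_dist d) (r, 0) CJ (\<lambda>_. pJ)"
proof (rule opt_nonneg[OF finite_J_clients])
  have "fst y \<in> V" if "y \<in> insert (r, 0) CJ" for y
    using that heavy_subset root by (auto simp: J_clients_eq)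
  then show "\<forall>x\<in>insert (r, 0) CJ. \<forall>y\<in>insert (r, 0) CJ. 0 \<le> J_dist d x y"
    by (simp add: J_dist_def metric_nonneg[OF metric])
  show "\<forall>v\<in>CJ. 0 \<le> pJ \<and> pJ \<le> 1" using J_prob_pos J_prob_le_one by simp
qed

lemma heavy_tour_bound:
  assumes "\<pi>h \<in> master_tours CJ" "consecutive \<pi>h"
    and approx: "exp_lat (J_dist d) (r, 0) CJ (\<lambda>_. pJ) \<pi>h \<le> \<rho> * opt (J_dist d) (r, 0) CJ (\<lambda>_. pJ)"
  shows "0 \<le> \<rho>"
    and "exp_lat d r (V - {r}) p (remdups (map fst \<pi>h)) \<le> 4 * (1 + 1 / n) ^ 3 * \<rho> * opt d r X p"
proof -
  show \<rho>: "0 \<le> \<rho>"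
  proof (rule ccontr)
    assume "\<not> 0 \<le> \<rho>"
    then have "\<rho> * opt (J_dist d) (r, 0) CJ (\<lambda>_. pJ) \<le> 0" using opt_J_nonneg by (simp add: mult_nonpos_nonneg)
    then show False using approx exp_lat_J_pos[OF assms(1,2)] by linarith
  qed
  have "exp_lat d r (V - {r}) p (remdups (map fst \<pi>h)) \<le> 4 * (\<rho> * opt (J_dist d) (r, 0) CJ (\<lambda>_. pJ))"
    using exp_lat_le_four_J[OF assms(1,2)] approx by linarith
  also have "\<dots> \<le> 4 * (\<rho> * ((1 + 1 / n) ^ 3 * opt d r X p))"
    using opt_J_le \<rho> by (intro mult_left_mono) auto
  finally show "exp_lat d r (V - {r}) p (remdups (map fst \<pi>h)) \<le> 4 * (1 + 1 / n) ^ 3 * \<rho> * opt d r X p"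
    by (simp add: mult_ac)
qed

end

theorem corollary1:
  shows "\<exists>\<epsilon> :: nat \<Rightarrow> real. \<epsilon> \<longlonglongrightarrow> 0 \<and>
    (\<forall>(V :: 'a set) d r p (\<rho> :: real) \<pi>h.
       finite V \<longrightarrow> r \<in> V \<longrightarrow> metric_on V d \<longrightarrow>
       (\<forall>v\<in>V - {r}. 0 \<le> p v \<and> p v \<le> 1) \<longrightarrow>
       \<pi>h \<in> master_tours (J_clients V r p) \<longrightarrow> consecutive \<pi>h \<longrightarrow>
       exp_lat (J_dist d) (r, 0) (J_clients V r p) (\<lambda>_. J_prob V r p) \<pi>h
         \<le> \<rho> * opt (J_dist d) (r, 0) (J_clients V r p) (\<lambda>_. J_prob V r p) \<longrightarrow>
       exp_lat d r (V - {r}) p (remdups (map fst \<pi>h))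
         \<le> (1 + \<epsilon> (card V)) * (exp 1 / (exp 1 - 1)) ^ 4 * \<rho> * opt d r (heavy V r p) p)"
proof (intro exI[of _ "\<lambda>n. (1 + 1 / real n) ^ 3 - 1"] conjI allI impI)
  show "(\<lambda>n. (1 + 1 / real n) ^ 3 - 1) \<longlonglongrightarrow> 0" by (rule one_plus_inverse_cube_tendsto)
next
  fix V :: "'a set" and d r p and \<rho> :: real and \<pi>h
  assume inst: "finite V" "r \<in> V" "metric_on V d" "\<forall>v\<in>V - {r}. 0 \<le> p v \<and> p v \<le> 1"
    and tour: "\<pi>h \<in> master_tours (J_clients V r p)" "consecutive \<pi>h"
    and approx: "exp_lat (J_dist d) (r, 0) (J_clients V r p) (\<lambda>_. J_prob V r p) \<pi>h
      \<le> \<rho> * opt (J_dist d) (r, 0) (J_clients V r p) (\<lambda>_. J_prob V r p)"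
  let ?c = "(1 + 1 / real (card V)) ^ 3 * \<rho> * opt d r (heavy V r p) p"
  show "exp_lat d r (V - {r}) p (remdups (map fst \<pi>h))
      \<le> (1 + ((1 + 1 / real (card V)) ^ 3 - 1)) * (exp 1 / (exp 1 - 1)) ^ 4 * \<rho> * opt d r (heavy V r p) p"
  proof (cases "heavy V r p = {}")
    case True
    then have "\<pi>h = []" using tour(1) by (simp add: J_clients_def master_tours_def)
    then show ?thesis using True by (simp add: exp_lat_def opt_def master_tours_def)
  next
    case False
    then interpret heavy_instance V d r p using inst by unfold_locales
    have "0 \<le> ?c" using heavy_tour_bound(1)[OF tour approx] opt_heavy_nonneg by simp
    then have "4 * ?c \<le> (exp 1 / (exp 1 - 1)) ^ 4 * ?c" by (intro mult_right_mono four_le_e_ratio_pow)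
    then show ?thesis using heavy_tour_bound(2)[OF tour approx] by (simp add: mult_ac)
  qed
qed

end
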